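(* In the setting described in the context, assume there exist $\hat{i}_0\in I$ and $j\in J_{\hat{i}_0}$ with $\hat{x}_j\neq0$. For each $\hat{i}\in I$ let $t_{\hat{i}}$ be the optimal value and $\alpha^{(\hat{i})}$ an optimal solution of \[ \min_{\alpha}\ \sum_{i\in I}\xi_i\|\alpha_i-\hat{\alpha}_i\| \] subject to $\sum_{j\in J}a_{\hat{i}j}\hat{x}_j-\sum_{j\in J_{\hat{i}}}\alpha_{\hat{i}j}|\hat{x}_j|=b_{\hat{i}}$; $\sum_{j\in J}a_{ij}\hat{x}_j-\sum_{j\in J_i}\alpha_{ij}|\hat{x}_j|\ge b_i$ for all $i\in I$; $\alpha_{ij}\ge0$ for all $j\in J_i,i\in I$. Let $i^*\in\arg\min_{\hat{i}\in I}t_{\hat{i}}$ and $\alpha^*=\alpha^{(i^* )}$. Then the optimal value of RLO-IU-SD is $t_{i^*}$, and there exists an optimal solution of RLO-IU-SD with $\alpha_i=\alpha^*_i$ for all $i\in I$, $c=\bar{a}_{i^*}(\alpha^*_{i^*},\hat{x})$, and $\pi=e_{i^*}$. Moreover, if for every $i\in I$ either $b_i>0$ or $a_{ij}\neq0$ for some $j\in J\setminus J_i$, then this solution satisfies $c\neq0$ and $\bar{a}_i(\alpha_i,x)\neq0$ for all $i\in I$ and all $x\in\mathbb{R}^n$.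
   Context: Let $I=\{1,\dots,m\}$, $J=\{1,\dots,n\}$. Given are $a_{ij}\in\mathbb{R}$, $b\in\mathbb{R}^m$, nonempty index sets $J_i\subseteq J$ ($i\in I$), an observed point $\hat{x}\in\mathbb{R}^n$, prior vectors $\hat{\alpha}_i\in\mathbb{R}^{|J_i|}$, real weights $\xi_i$ ($i\in I$), and a norm $\|\cdot\|$. Let $\mathrm{sgn}(t)=1$ if $t\ge0$ and $-1$ otherwise, and $e_i$ the $i$-th unit vector of $\mathbb{R}^m$. For $\alpha_i=(\alpha_{ij})_{j\in J_i}\ge0$ and $x\in\mathbb{R}^n$, $\bar{a}_i(\alpha_i,x)\in\mathbb{R}^n$ has components $\bar{a}_{ij}(\alpha_i,x)=a_{ij}-\mathrm{sgn}(x_j)\alpha_{ij}$ if $j\in J_i$ and $a_{ij}$ if $j\in J\setminus J_i$. The problem RLO-IU-SD is \[ \min_{\alpha,c,u,\pi,\lambda,\mu}\ \sum_{i\in I}\xi_i\|\alpha_i-\hat{\alpha}_i\| \] subject to: $\sum_{j\in J}c_j\hat{x}_j-\sum_{i\in I}b_i\pi_i=0$; $\alpha_{ij}\hat{x}_j+u_{ij}\ge0$ and $-\alpha_{ij}\hat{x}_j+u_{ij}\ge0$ for all $j\in J_i,i\in I$; $\sum_{j\in J}a_{ij}\hat{x}_j-\sum_{j\in J_i}u_{ij}\ge b_i$ for all $i\in I$; $\alpha_{ij}\ge0$ for all $j\in J_i,i\in I$; $\sum_{i\in I}\pi_i=1$; $\sum_{i\in I}a_{ij}\pi_i+\sum_{i\in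 I:j\in J_i}\alpha_{ij}(\lambda_{ij}-\mu_{ij})=c_j$ for all $j\in J$; $\pi_i=\lambda_{ij}+\mu_{ij}$ for all $j\in J_i,i\in I$; $\pi_i,\lambda_{ij},\mu_{ij}\ge0$ for all $j\in J_i,i\in I$. Here $c\in\mathbb{R}^n$, $\pi\in\mathbb{R}^m$. *)

theory Defs
  imports "HOL-Analysis.Analysis"
begin

text \<open>Index sets I and J are the finite types 'm and 'n (I = UNIV, J = UNIV).
  Vectors are functions on these types.  For alpha, u, lambda, mu, the value at
  (i,j) with j outside J i is irrelevant.\<close>

definition sgnp :: "real \<Rightarrow> real" where
  "sgnp t = (if t \<ge> 0 then 1 else -1)"

definition abar :: "('m \<Rightarrow> 'n \<Rightarrow> real) \<Rightarrow> ('m \<Rightarrow> 'n set) \<Rightarrow> 'm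
    \<Rightarrow> ('n \<Rightarrow> real) \<Rightarrow> ('n \<Rightarrow> real) \<Rightarrow> ('n \<Rightarrow> real)" where
  "abar a J i al x = (\<lambda>j. if j \<in> J i then a i j - sgnp (x j) * al j else a i j)"

text \<open>A vector of R^S (coordinates in S) represented as a function vanishing outside S.\<close>
definition vec_on :: "'n set \<Rightarrow> ('n \<Rightarrow> real) \<Rightarrow> ('n \<Rightarrow> real)" where
  "vec_on S v = (\<lambda>j. if j \<in> S then v j else 0)"

definition is_norm_on :: "'n set \<Rightarrow> (('n \<Rightarrow> real) \<Rightarrow> real) \<Rightarrow> bool" where
  "is_norm_on S N \<longleftrightarrow>
     (\<forall>v. (\<forall>j. j \<notin> S \<longrightarrow> v j = 0) \<longrightarrow> N v \<ge> 0 \<and> (N v = 0 \<longleftrightarrow> v = (\<lambda>_. 0))) \<and>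
     (\<forall>v r. (\<forall>j. j \<notin> S \<longrightarrow> v j = 0) \<longrightarrow> N (\<lambda>j. r * v j) = \<bar>r\<bar> * N v) \<and>
     (\<forall>v w. (\<forall>j. j \<notin> S \<longrightarrow> v j = 0) \<longrightarrow> (\<forall>j. j \<notin> S \<longrightarrow> w j = 0) \<longrightarrow>
        N (\<lambda>j. v j + w j) \<le> N v + N w)"

definition objective :: "('m::finite \<Rightarrow> real) \<Rightarrow> ('n set \<Rightarrow> ('n \<Rightarrow> real) \<Rightarrow> real)
    \<Rightarrow> ('m \<Rightarrow> 'n set) \<Rightarrow> ('m \<Rightarrow> 'n \<Rightarrow> real) \<Rightarrow> ('m \<Rightarrow> 'n \<Rightarrow> real) \<Rightarrow> real" where
  "objective xi nrm J ahat al =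
     (\<Sum>i\<in>UNIV. xi i * nrm (J i) (vec_on (J i) (\<lambda>j. al i j - ahat i j)))"

definition rlo_feasible :: "('m::finite \<Rightarrow> 'n::finite \<Rightarrow> real) \<Rightarrow> ('m \<Rightarrow> real)
    \<Rightarrow> ('m \<Rightarrow> 'n set) \<Rightarrow> ('n \<Rightarrow> real)
    \<Rightarrow> ('m \<Rightarrow> 'n \<Rightarrow> real) \<Rightarrow> ('n \<Rightarrow> real) \<Rightarrow> ('m \<Rightarrow> 'n \<Rightarrow> real) \<Rightarrow> ('m \<Rightarrow> real)
    \<Rightarrow> ('m \<Rightarrow> 'n \<Rightarrow> real) \<Rightarrow> ('m \<Rightarrow> 'n \<Rightarrow> real) \<Rightarrow> bool" where
  "rlo_feasible a b J xh al c u p lam mu \<longleftrightarrow>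
     (\<Sum>j\<in>UNIV. c j * xh j) - (\<Sum>i\<in>UNIV. b i * p i) = 0 \<and>
     (\<forall>i. \<forall>j\<in>J i. al i j * xh j + u i j \<ge> 0 \<and> - al i j * xh j + u i j \<ge> 0) \<and>
     (\<forall>i. (\<Sum>j\<in>UNIV. a i j * xh j) - (\<Sum>j\<in>J i. u i j) \<ge> b i) \<and>
     (\<forall>i. \<forall>j\<in>J i. al i j \<ge> 0) \<and>
     (\<Sum>i\<in>UNIV. p i) = 1 \<and>
     (\<forall>j. (\<Sum>i\<in>UNIV. a i j * p i) + (\<Sum>i\<in>{i. j \<in> J i}. al i j * (lam i j - mu i j)) = c j) \<and>
     (\<forall>i. \<forall>j\<in>J i. p i = lam i j + mu i j) \<and>
     (\<forall>i. p i \<ge> 0) \<and>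
     (\<forall>i. \<forall>j\<in>J i. lam i j \<ge> 0 \<and> mu i j \<ge> 0)"

definition rlo_optimal where
  "rlo_optimal a b J xh xi nrm ahat al c u p lam mu \<longleftrightarrow>
     rlo_feasible a b J xh al c u p lam mu \<and>
     (\<forall>al' c' u' p' lam' mu'. rlo_feasible a b J xh al' c' u' p' lam' mu' \<longrightarrow>
        objective xi nrm J ahat al \<le> objective xi nrm J ahat al')"

text \<open>Optimal value of RLO-IU-SD (+infinity if infeasible).\<close>
definition rlo_value where
  "rlo_value a b J xh xi nrm ahat =
     Inf {ereal (objective xi nrm J ahat al) | al c u p lam mu.
            rlo_feasible a b J xh al c u p lam mu}"

definition sub_feasible :: "('m::finite \<Rightarrow> 'n::finite \<Rightarrow> real) \<Rightarrow> ('m \<Rightarrow> real)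
    \<Rightarrow> ('m \<Rightarrow> 'n set) \<Rightarrow> ('n \<Rightarrow> real) \<Rightarrow> 'm \<Rightarrow> ('m \<Rightarrow> 'n \<Rightarrow> real) \<Rightarrow> bool" where
  "sub_feasible a b J xh ih al \<longleftrightarrow>
     (\<Sum>j\<in>UNIV. a ih j * xh j) - (\<Sum>j\<in>J ih. al ih j * \<bar>xh j\<bar>) = b ih \<and>
     (\<forall>i. (\<Sum>j\<in>UNIV. a i j * xh j) - (\<Sum>j\<in>J i. al i j * \<bar>xh j\<bar>) \<ge> b i) \<and>
     (\<forall>i. \<forall>j\<in>J i. al i j \<ge> 0)"

definition sub_optimal where
  "sub_optimal a b J xh xi nrm ahat ih al \<longleftrightarrow>
     sub_feasible a b J xh ih al \<and>
     (\<forall>al'. sub_feasible a b J xh ih al' \<longrightarrow>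
        objective xi nrm J ahat al \<le> objective xi nrm J ahat al')"

text \<open>Optimal value of the subproblem (+infinity if infeasible).\<close>
definition sub_value where
  "sub_value a b J xh xi nrm ahat ih =
     Inf {ereal (objective xi nrm J ahat al) | al. sub_feasible a b J xh ih al}"

end

theory Submission imports Defs begin

text \<open>Since \<open>\<lambda>\<^sub>i\<^sub>j + \<mu>\<^sub>i\<^sub>j = \<pi>\<^sub>i\<close>, the robust constraints and the strong duality equation of
  RLO-IU-SD force \<open>\<Sum>\<^sub>i \<pi>\<^sub>i (s\<^sub>i - b\<^sub>i) \<le> 0\<close>, where \<open>s\<^sub>i = a\<^sub>i\<cdot>x - \<Sum>\<^sub>j \<alpha>\<^sub>i\<^sub>j |x\<^sub>j|\<close> is the
  worst-case value of row \<open>i\<close> at \<open>x\<close>. All terms are nonnegative and \<open>\<pi>\<close> is a probability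
  vector, so some row with \<open>\<pi>\<^sub>i > 0\<close> is tight: every feasible \<open>\<alpha>\<close> is feasible for one of the
  subproblems. Conversely a subproblem solution for row \<open>k\<close> yields a feasible point with
  \<open>\<pi> = e\<^sub>k\<close> and \<open>c = abar\<^sub>k(\<alpha>\<^sub>k, x)\<close>, whose cost vector satisfies \<open>c\<cdot>x = s\<^sub>k\<close>.
  Both problems share the objective, so the optimal value is the least subproblem value.
  Finally, if \<open>abar\<^sub>i(\<alpha>\<^sub>i, x) = 0\<close> then \<open>a\<^sub>i\<close> vanishes off \<open>J\<^sub>i\<close> and \<open>s\<^sub>i \<le> 0\<close>,
  which contradicts \<open>b\<^sub>i \<le> s\<^sub>i\<close> under the nondegeneracy assumption.\<close>

definition robust_lhs :: "('m \<Rightarrow> 'n::finite \<Rightarrow> real) \<Rightarrow> ('m \<Rightarrow> 'n set) \<Rightarrow> ('n \<Rightarrow> real)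
    \<Rightarrow> ('m \<Rightarrow> 'n \<Rightarrow> real) \<Rightarrow> 'm \<Rightarrow> real" where
  "robust_lhs a J xh al i = (\<Sum>j\<in>UNIV. a i j * xh j) - (\<Sum>j\<in>J i. al i j * \<bar>xh j\<bar>)"

lemma sub_feasible_iff_robust_lhs:
  "sub_feasible a b J xh k al \<longleftrightarrow>
     robust_lhs a J xh al k = b k \<and> (\<forall>i. b i \<le> robust_lhs a J xh al i) \<and>
     (\<forall>i. \<forall>j\<in>J i. 0 \<le> al i j)"
  unfolding sub_feasible_def robust_lhs_def by blast

lemma sgnp_mult_self: "sgnp r * r = \<bar>r\<bar>"
  unfolding sgnp_def by auto

lemma sgnp_mult_le_abs: "sgnp r * s \<le> \<bar>s\<bar>"
  unfolding sgnp_def by auto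

lemma abar_inner_self_eq_robust_lhs:
  fixes a :: "'m \<Rightarrow> 'n::finite \<Rightarrow> real"
  shows "(\<Sum>j\<in>UNIV. abar a J i (al i) xh j * xh j) = robust_lhs a J xh al i"
proof -
  have "abar a J i (al i) xh j * xh j = a i j * xh j - (if j \<in> J i then al i j * \<bar>xh j\<bar> else 0)" for j
    unfolding abar_def using sgnp_mult_self[of "xh j"] by (auto simp: algebra_simps)
  then show ?thesis
    unfolding robust_lhs_def by (simp add: sum_subtractf sum.If_cases)
qed

lemma abar_eq_dual_cost:
  fixes a :: "'m::finite \<Rightarrow> 'n \<Rightarrow> real"
  assumes "\<And>i. lam i j - mu i j = (if i = k then - sgnp (xh j) else 0)"
  shows "(\<Sum>i\<in>UNIV. a i j * (if i = k then 1 else 0)) +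
      (\<Sum>i\<in>{i. j \<in> J i}. al i j * (lam i j - mu i j)) = abar a J k (al k) xh j"
  unfolding assms abar_def by (simp add: if_distrib sum.delta cong: if_cong)

lemma weighted_sum_nonpos_imp_zero:
  fixes p f :: "'a \<Rightarrow> 'b::linordered_idom"
  assumes "finite A" "0 < sum p A"
    and "\<And>i. i \<in> A \<Longrightarrow> 0 \<le> p i" "\<And>i. i \<in> A \<Longrightarrow> 0 \<le> f i"
    and "(\<Sum>i\<in>A. p i * f i) \<le> 0"
  shows "\<exists>i\<in>A. 0 < p i \<and> f i = 0"
proof -
  have nonneg: "0 \<le> p i * f i" if "i \<in> A" for i
    using assms(3,4) that by simp
  then have "(\<Sum>i\<in>A. p i * f i) = 0"
    using assms(5) by (intro antisym sum_nonneg) auto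
  then have zero: "\<forall>i\<in>A. p i * f i = 0"
    using sum_nonneg_eq_0_iff[OF assms(1), of "\<lambda>i. p i * f i"] nonneg by blast
  obtain i where "i \<in> A" "p i \<noteq> 0"
    using assms(2) sum.not_neutral_contains_not_neutral by (metis less_irrefl)
  with zero assms(3) show ?thesis
    by force
qed

lemma rlo_feasibleD:
  fixes a :: "'m::finite \<Rightarrow> 'n::finite \<Rightarrow> real"
  assumes "rlo_feasible a b J xh al c u p lam mu"
  shows "(\<Sum>j\<in>UNIV. c j * xh j) = (\<Sum>i\<in>UNIV. b i * p i)"
    and "j \<in> J i \<Longrightarrow> \<bar>al i j * xh j\<bar> \<le> u i j"
    and "b i \<le> (\<Sum>j\<in>UNIV. a i j * xh j) - sum (u i) (J i)"
    and "j \<in> J i \<Longrightarrow> 0 \<le> al i j"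
    and "sum p UNIV = 1"
    and "c j = (\<Sum>i\<in>UNIV. a i j * p i) + (\<Sum>i\<in>{i. j \<in> J i}. al i j * (lam i j - mu i j))"
    and "j \<in> J i \<Longrightarrow> p i = lam i j + mu i j"
    and "0 \<le> p i"
    and "j \<in> J i \<Longrightarrow> 0 \<le> lam i j"
    and "j \<in> J i \<Longrightarrow> 0 \<le> mu i j"
  using assms unfolding rlo_feasible_def abs_le_iff
  by (simp_all, force+)

context
  fixes a :: "'m::finite \<Rightarrow> 'n::finite \<Rightarrow> real" and b :: "'m \<Rightarrow> real"
    and J :: "'m \<Rightarrow> 'n set" and xh c :: "'n \<Rightarrow> real" and p :: "'m \<Rightarrow> real"
    and al u lam mu :: "'m \<Rightarrow> 'n \<Rightarrow> real"
  assumes feasible: "rlo_feasible a b J xh al c u p lam mu"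
begin

lemma rlo_feasible_robust_lhs_ge: "b i \<le> robust_lhs a J xh al i"
proof -
  have "al i j * \<bar>xh j\<bar> \<le> u i j" if "j \<in> J i" for j
    using rlo_feasibleD(2,4)[OF feasible that] by (simp add: abs_mult)
  then have "(\<Sum>j\<in>J i. al i j * \<bar>xh j\<bar>) \<le> sum (u i) (J i)"
    by (rule sum_mono)
  with rlo_feasibleD(3)[OF feasible, of i] show ?thesis
    unfolding robust_lhs_def by linarith
qed

lemma rlo_feasible_cost_inner:
  "(\<Sum>j\<in>UNIV. c j * xh j) =
     (\<Sum>i\<in>UNIV. p i * (\<Sum>j\<in>UNIV. a i j * xh j) + (\<Sum>j\<in>J i. al i j * (lam i j - mu i j) * xh j))"
proof -
  have "(\<Sum>j\<in>UNIV. c j * xh j) =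
      (\<Sum>j\<in>UNIV. \<Sum>i\<in>UNIV. a i j * p i * xh j) +
      (\<Sum>j\<in>UNIV. \<Sum>i\<in>{i. i \<in> UNIV \<and> j \<in> J i}. al i j * (lam i j - mu i j) * xh j)"
    by (simp add: rlo_feasibleD(6)[OF feasible] distrib_right sum_distrib_right sum.distrib)
  also have "\<dots> = (\<Sum>i\<in>UNIV. \<Sum>j\<in>UNIV. a i j * p i * xh j) +
      (\<Sum>i\<in>UNIV. \<Sum>j\<in>{j. j \<in> UNIV \<and> j \<in> J i}. al i j * (lam i j - mu i j) * xh j)"
    by (intro arg_cong2[where f = "(+)"] sum.swap sum.swap_restrict finite)
  finally show ?thesis
    by (simp add: sum.distrib sum_distrib_left mult_ac)
qed

lemma rlo_feasible_dual_term_ge: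
  assumes "j \<in> J i"
  shows "- (p i * (al i j * \<bar>xh j\<bar>)) \<le> al i j * (lam i j - mu i j) * xh j"
proof -
  have "0 \<le> al i j" "\<bar>lam i j - mu i j\<bar> \<le> p i"
    using rlo_feasibleD(4,7,9,10)[OF feasible assms] by auto
  then have "\<bar>xh j\<bar> * (al i j * \<bar>lam i j - mu i j\<bar>) \<le> \<bar>xh j\<bar> * (al i j * p i)"
    by (intro mult_left_mono) auto
  with \<open>0 \<le> al i j\<close>
  have "\<bar>al i j * (lam i j - mu i j) * xh j\<bar> \<le> p i * (al i j * \<bar>xh j\<bar>)"
    by (simp add: abs_mult mult_ac)
  then show ?thesis
    by linarith
qed

lemma rlo_feasible_weighted_robust_lhs_le:
  "(\<Sum>i\<in>UNIV. p i * robust_lhs a J xh al i) \<le> (\<Sum>i\<in>UNIV. p i * b i)"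
proof -
  have "p i * robust_lhs a J xh al i \<le>
      p i * (\<Sum>j\<in>UNIV. a i j * xh j) + (\<Sum>j\<in>J i. al i j * (lam i j - mu i j) * xh j)" for i
  proof -
    have "- (\<Sum>j\<in>J i. p i * (al i j * \<bar>xh j\<bar>)) \<le> (\<Sum>j\<in>J i. al i j * (lam i j - mu i j) * xh j)"
      using rlo_feasible_dual_term_ge by (simp add: sum_mono flip: sum_negf)
    then show ?thesis
      unfolding robust_lhs_def by (simp add: right_diff_distrib sum_distrib_left)
  qed
  then have "(\<Sum>i\<in>UNIV. p i * robust_lhs a J xh al i) \<le> (\<Sum>j\<in>UNIV. c j * xh j)"
    unfolding rlo_feasible_cost_inner by (rule sum_mono)
  also have "\<dots> = (\<Sum>i\<in>UNIV. p i * b i)"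
    using rlo_feasibleD(1)[OF feasible] by (simp add: mult.commute)
  finally show ?thesis .
qed

lemma rlo_feasible_imp_sub_feasible: "\<exists>k. sub_feasible a b J xh k al"
proof -
  have "(\<Sum>i\<in>UNIV. p i * (robust_lhs a J xh al i - b i)) \<le> 0"
    using rlo_feasible_weighted_robust_lhs_le by (simp add: right_diff_distrib sum_subtractf)
  then obtain k where "robust_lhs a J xh al k = b k"
    using weighted_sum_nonpos_imp_zero[of UNIV p "\<lambda>i. robust_lhs a J xh al i - b i"]
      rlo_feasibleD(5,8)[OF feasible] rlo_feasible_robust_lhs_ge by auto
  then show ?thesis
    unfolding sub_feasible_iff_robust_lhs
    using rlo_feasible_robust_lhs_ge rlo_feasibleD(4)[OF feasible] by blast
qed

end

lemma sub_feasible_imp_rlo_feasible: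
  fixes a :: "'m::finite \<Rightarrow> 'n::finite \<Rightarrow> real"
  assumes sub: "sub_feasible a b J xh k al"
  shows "rlo_feasible a b J xh al (abar a J k (al k) xh) (\<lambda>i j. al i j * \<bar>xh j\<bar>)
    (\<lambda>i. if i = k then 1 else 0)
    (\<lambda>i j. if i = k then (1 - sgnp (xh j)) / 2 else 0)
    (\<lambda>i j. if i = k then (1 + sgnp (xh j)) / 2 else 0)"
proof -
  define e :: "'m \<Rightarrow> real" where "e i = (if i = k then 1 else 0)" for i
  define lam :: "'m \<Rightarrow> 'n \<Rightarrow> real" where "lam i j = (if i = k then (1 - sgnp (xh j)) / 2 else 0)" for i j
  define mu :: "'m \<Rightarrow> 'n \<Rightarrow> real" where "mu i j = (if i = k then (1 + sgnp (xh j)) / 2 else 0)" for i j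
  have al_nonneg: "\<forall>i. \<forall>j\<in>J i. 0 \<le> al i j"
    using sub unfolding sub_feasible_def by blast
  have duality: "(\<Sum>j\<in>UNIV. abar a J k (al k) xh j * xh j) = (\<Sum>i\<in>UNIV. b i * e i)"
    using sub unfolding abar_inner_self_eq_robust_lhs sub_feasible_iff_robust_lhs e_def
    by (simp add: if_distrib cong: if_cong)
  have "lam i j - mu i j = (if i = k then - sgnp (xh j) else 0)" for i j
    unfolding lam_def mu_def by (simp add: field_simps)
  then have cost: "(\<Sum>i\<in>UNIV. a i j * e i) + (\<Sum>i\<in>{i. j \<in> J i}. al i j * (lam i j - mu i j)) =
      abar a J k (al k) xh j" for j
    unfolding e_def by (rule abar_eq_dual_cost)
  have lam_mu: "0 \<le> lam i j" "0 \<le> mu i j" "e i = lam i j + mu i j" for i j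
    unfolding lam_def mu_def e_def sgnp_def by auto
  have u_bound: "0 \<le> al i j * xh j + al i j * \<bar>xh j\<bar>" "0 \<le> - al i j * xh j + al i j * \<bar>xh j\<bar>"
    if "j \<in> J i" for i j
    using al_nonneg that abs_ge_self[of "al i j * xh j"] abs_ge_minus_self[of "al i j * xh j"]
    by (simp_all add: abs_mult)
  have "sum e UNIV = 1" "0 \<le> e i" for i
    unfolding e_def by simp_all
  with sub duality cost lam_mu al_nonneg u_bound
  have "rlo_feasible a b J xh al (abar a J k (al k) xh) (\<lambda>i j. al i j * \<bar>xh j\<bar>) e lam mu"
    unfolding rlo_feasible_def sub_feasible_def by simp
  then show ?thesis
    by (simp only: e_def [abs_def] lam_def [abs_def] mu_def [abs_def])
qed

lemma sub_value_le_objective: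
  "sub_feasible a b J xh k al \<Longrightarrow> sub_value a b J xh xi nrm ahat k \<le> ereal (objective xi nrm J ahat al)"
  unfolding sub_value_def by (rule Inf_lower) auto

lemma sub_optimal_imp_sub_value:
  assumes "sub_optimal a b J xh xi nrm ahat k al"
  shows "sub_value a b J xh xi nrm ahat k = ereal (objective xi nrm J ahat al)"
proof (rule antisym)
  show "sub_value a b J xh xi nrm ahat k \<le> ereal (objective xi nrm J ahat al)"
    using assms unfolding sub_optimal_def by (blast intro: sub_value_le_objective)
  show "ereal (objective xi nrm J ahat al) \<le> sub_value a b J xh xi nrm ahat k"
    using assms unfolding sub_optimal_def sub_value_def by (auto intro: Inf_greatest)
qed

lemma rlo_value_le_objective:
  "rlo_feasible a b J xh al c u p lam mu \<Longrightarrow>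
     rlo_value a b J xh xi nrm ahat \<le> ereal (objective xi nrm J ahat al)"
  unfolding rlo_value_def by (rule Inf_lower) blast

lemma rlo_optimal_if_objective_eq_value:
  assumes "rlo_feasible a b J xh al c u p lam mu"
    and "rlo_value a b J xh xi nrm ahat = ereal (objective xi nrm J ahat al)"
  shows "rlo_optimal a b J xh xi nrm ahat al c u p lam mu"
proof -
  have "objective xi nrm J ahat al \<le> objective xi nrm J ahat al'"
    if "rlo_feasible a b J xh al' c' u' p' lam' mu'" for al' c' u' p' lam' mu'
    using rlo_value_le_objective[OF that, where xi = xi and nrm = nrm and ahat = ahat] assms(2)
    by simp
  then show ?thesis
    unfolding rlo_optimal_def using assms(1) by blast
qed

lemma rlo_value_eq_INF_sub_value:
  fixes a :: "'m::finite \<Rightarrow> 'n::finite \<Rightarrow> real"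
  shows "rlo_value a b J xh xi nrm ahat = (INF k. sub_value a b J xh xi nrm ahat k)"
proof (rule antisym)
  show "rlo_value a b J xh xi nrm ahat \<le> (INF k. sub_value a b J xh xi nrm ahat k)"
  proof (rule INF_greatest)
    fix k
    show "rlo_value a b J xh xi nrm ahat \<le> sub_value a b J xh xi nrm ahat k"
      unfolding sub_value_def
      by (rule Inf_greatest, clarify)
        (rule rlo_value_le_objective[OF sub_feasible_imp_rlo_feasible])
  qed
  show "(INF k. sub_value a b J xh xi nrm ahat k) \<le> rlo_value a b J xh xi nrm ahat"
    unfolding rlo_value_def
  proof (rule Inf_greatest, clarify)
    fix al c u p lam mu
    assume "rlo_feasible a b J xh al c u p lam mu"
    then obtain k where "sub_feasible a b J xh k al"
      using rlo_feasible_imp_sub_feasible by blast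
    have "(INF k. sub_value a b J xh xi nrm ahat k) \<le> sub_value a b J xh xi nrm ahat k"
      by (rule INF_lower) simp
    also have "\<dots> \<le> ereal (objective xi nrm J ahat al)"
      using \<open>sub_feasible a b J xh k al\<close> by (rule sub_value_le_objective)
    finally show "(INF k. sub_value a b J xh xi nrm ahat k) \<le> ereal (objective xi nrm J ahat al)" .
  qed
qed

lemma abar_neq_zero:
  fixes a :: "'m \<Rightarrow> 'n::finite \<Rightarrow> real"
  assumes row: "b i \<le> robust_lhs a J xh al i" and al_nonneg: "\<forall>j\<in>J i. 0 \<le> al i j"
    and nondegenerate: "0 < b i \<or> (\<exists>j. j \<notin> J i \<and> a i j \<noteq> 0)"
  shows "abar a J i (al i) x \<noteq> (\<lambda>_. 0)"
proof
  assume zero: "abar a J i (al i) x = (\<lambda>_. 0)"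
  then have a_row: "a i j = (if j \<in> J i then sgnp (x j) * al i j else 0)" for j
    unfolding abar_def by (auto dest: fun_cong[of _ _ j] split: if_splits)
  have "(\<Sum>j\<in>UNIV. a i j * xh j) = (\<Sum>j\<in>UNIV. if j \<in> J i then al i j * (sgnp (x j) * xh j) else 0)"
    by (rule sum.cong) (simp_all add: a_row)
  also have "\<dots> = (\<Sum>j\<in>J i. al i j * (sgnp (x j) * xh j))"
    by (simp add: sum.If_cases)
  also have "\<dots> \<le> (\<Sum>j\<in>J i. al i j * \<bar>xh j\<bar>)"
    using al_nonneg by (intro sum_mono mult_left_mono sgnp_mult_le_abs) auto
  finally have "b i \<le> 0"
    using row unfolding robust_lhs_def by linarith
  moreover have "a i j = 0" if "j \<notin> J i" for j
    using a_row[of j] that by simp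
  ultimately show False
    using nondegenerate by force
qed

theorem theorem4:
  fixes a :: "'m::finite \<Rightarrow> 'n::finite \<Rightarrow> real"
    and b :: "'m \<Rightarrow> real"
    and J :: "'m \<Rightarrow> 'n set"
    and xh :: "'n \<Rightarrow> real"
    and ahat :: "'m \<Rightarrow> 'n \<Rightarrow> real"
    and xi :: "'m \<Rightarrow> real"
    and nrm :: "'n set \<Rightarrow> ('n \<Rightarrow> real) \<Rightarrow> real"
    and t :: "'m \<Rightarrow> ereal"
    and istar :: 'm
    and astar :: "'m \<Rightarrow> 'n \<Rightarrow> real"
  assumes J_ne: "\<forall>i. J i \<noteq> {}"
    and norm: "\<forall>S. is_norm_on S (nrm S)"
    and nz: "\<exists>i0. \<exists>j\<in>J i0. xh j \<noteq> 0"
    and t_def: "\<forall>ih. t ih = sub_value a b J xh xi nrm ahat ih"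
    and istar_min: "\<forall>ih. t istar \<le> t ih"
    and astar_opt: "sub_optimal a b J xh xi nrm ahat istar astar"
  shows "rlo_value a b J xh xi nrm ahat = t istar \<and>
    (\<exists>u lam mu. rlo_optimal a b J xh xi nrm ahat astar
        (abar a J istar (astar istar) xh) u (\<lambda>i. if i = istar then 1 else 0) lam mu) \<and>
    ((\<forall>i. b i > 0 \<or> (\<exists>j. j \<notin> J i \<and> a i j \<noteq> 0)) \<longrightarrow>
       abar a J istar (astar istar) xh \<noteq> (\<lambda>_. 0) \<and>
       (\<forall>i x. abar a J i (astar i) x \<noteq> (\<lambda>_. 0)))"
proof -
  have sub: "sub_feasible a b J xh istar astar"
    using astar_opt unfolding sub_optimal_def by blast
  have "(INF k. t k) = t istar"
    using istar_min by (intro antisym INF_greatest INF_lower) auto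
  then have optimal_value: "rlo_value a b J xh xi nrm ahat = t istar"
    using t_def by (simp add: rlo_value_eq_INF_sub_value)
  also have "\<dots> = ereal (objective xi nrm J ahat astar)"
    using t_def sub_optimal_imp_sub_value[OF astar_opt] by simp
  finally have "rlo_optimal a b J xh xi nrm ahat astar (abar a J istar (astar istar) xh)
      (\<lambda>i j. astar i j * \<bar>xh j\<bar>) (\<lambda>i. if i = istar then 1 else 0)
      (\<lambda>i j. if i = istar then (1 - sgnp (xh j)) / 2 else 0)
      (\<lambda>i j. if i = istar then (1 + sgnp (xh j)) / 2 else 0)"
    by (rule rlo_optimal_if_objective_eq_value[OF sub_feasible_imp_rlo_feasible[OF sub]])
  moreover have "abar a J i (astar i) x \<noteq> (\<lambda>_. 0)"
    if nondegenerate: "\<forall>i. b i > 0 \<or> (\<exists>j. j \<notin> J i \<and> a i j \<noteq> 0)" for i x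
    using sub nondegenerate unfolding sub_feasible_iff_robust_lhs
    by (intro abar_neq_zero[where b = b and xh = xh]) auto
  ultimately show ?thesis
    using optimal_value by auto
qed

end
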